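(* Let $L_1=L_1([0,1],\mu)$ with $\mu$ Lebesgue measure. The norm of $FBL[L_1]$ fails the Fatou property; that is, there is an upwards directed set $\mathcal F\subseteq FBL[L_1]_+$ having a supremum $y\in FBL[L_1]$ with $\sup\{\|x\|:x\in\mathcal F\}\ne\|y\|$.
   Context: For a real Banach space $E$ with dual $E^*$ and closed unit ball $B_E$, let $H[E]$ be the vector space of all positively homogeneous functions $f:E^*\to\mathbb R$ ($f(\lambda x^* )=\lambda f(x^* )$ for $\lambda>0$). For $f\in H[E]$ put $\|f\|_{FBL[E]}:=\sup\{\sum_{k=1}^n|f(x_k^* )| : n\in\mathbb N,\ x_1^*,\dots,x_n^*\in E^*,\ \sup_{x\in B_E}\sum_{k=1}^n|x_k^*(x)|\le 1\}$. $H_0[E]:=\{f\in H[E]:\|f\|_{FBL[E]}<\infty\}$ is a Banach lattice with this norm and pointwise order/operations. For $x\in E$ let $\delta_x(x^* )=x^*(x)$. $FBL[E]$ is the closed sublattice of $H_0[E]$ generated by $\{\delta_x:x\in E\}$. The norm of a Banach lattice $X$ has the Fatou property if whenever an upwards directed set $\mathcal F\subseteq X_+$ has a supremum $y$ in $X$, then $\sup\{\|x\|:x\in\mathcal F\}=\|y\|$. *)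

theory Defs
  imports "HOL-Analysis.Analysis"
begin

text \<open>Its elements are represented by the
  integrable functions on [0,1]; a.e.-equal representatives are identified implicitly, since
  every bounded functional takes equal values on them.\<close>

definition L1 :: "(real \<Rightarrow> real) set" where
  "L1 = {g. integrable (lebesgue_on {0..1}) g}"

definition L1norm :: "(real \<Rightarrow> real) \<Rightarrow> real" where
  "L1norm g = integral\<^sup>L (lebesgue_on {0..1}) (\<lambda>t. \<bar>g t\<bar>)"

definition L1dual :: "((real \<Rightarrow> real) \<Rightarrow> real) set" where
  "L1dual = {\<phi>. (\<forall>f\<in>L1. \<forall>g\<in>L1. \<phi> (\<lambda>t. f t + g t) = \<phi> f + \<phi> g)
               \<and> (\<forall>c. \<forall>f\<in>L1. \<phi> (\<lambda>t. c * f t) = c * \<phi> f)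
               \<and> (\<exists>C. \<forall>f\<in>L1. \<bar>\<phi> f\<bar> \<le> C * L1norm f)
               \<and> (\<forall>f. f \<notin> L1 \<longrightarrow> \<phi> f = 0)}"

type_synonym hfun = "((real \<Rightarrow> real) \<Rightarrow> real) \<Rightarrow> real"

definition extensional_dual :: "hfun \<Rightarrow> bool" where
  "extensional_dual f \<longleftrightarrow> (\<forall>\<phi>. \<phi> \<notin> L1dual \<longrightarrow> f \<phi> = 0)"

definition pos_homogeneous :: "hfun \<Rightarrow> bool" where
  "pos_homogeneous f \<longleftrightarrow> (\<forall>\<phi>\<in>L1dual. \<forall>r>0. f (\<lambda>x. r * \<phi> x) = r * f \<phi>)"

definition fbl_enorm :: "hfun \<Rightarrow> ereal" where
  "fbl_enorm f = (SUP p \<in> {(n, xs) | (n::nat) xs. (\<forall>k<n. xs k \<in> L1dual) \<and>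
        (\<forall>g\<in>L1. L1norm g \<le> 1 \<longrightarrow> (\<Sum>k<n. \<bar>xs k g\<bar>) \<le> 1)}.
      ereal (\<Sum>k<fst p. \<bar>f (snd p k)\<bar>))"

definition H0 :: "hfun set" where
  "H0 = {f. extensional_dual f \<and> pos_homogeneous f \<and> fbl_enorm f < \<infinity>}"

definition delta :: "(real \<Rightarrow> real) \<Rightarrow> hfun" where
  "delta x = (\<lambda>\<phi>. if \<phi> \<in> L1dual then \<phi> x else 0)"

inductive_set fbl_gen :: "hfun set" where
  base: "x \<in> L1 \<Longrightarrow> delta x \<in> fbl_gen"
| add: "f \<in> fbl_gen \<Longrightarrow> g \<in> fbl_gen \<Longrightarrow> (\<lambda>\<phi>. f \<phi> + g \<phi>) \<in> fbl_gen"
| smult: "f \<in> fbl_gen \<Longrightarrow> (\<lambda>\<phi>. c * f \<phi>) \<in> fbl_gen"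
| sup: "f \<in> fbl_gen \<Longrightarrow> g \<in> fbl_gen \<Longrightarrow> (\<lambda>\<phi>. max (f \<phi>) (g \<phi>)) \<in> fbl_gen"
| inf: "f \<in> fbl_gen \<Longrightarrow> g \<in> fbl_gen \<Longrightarrow> (\<lambda>\<phi>. min (f \<phi>) (g \<phi>)) \<in> fbl_gen"

definition FBL :: "hfun set" where
  "FBL = {f \<in> H0. \<forall>e>0. \<exists>g\<in>fbl_gen. fbl_enorm (\<lambda>\<phi>. f \<phi> - g \<phi>) < ereal e}"

definition fle :: "hfun \<Rightarrow> hfun \<Rightarrow> bool" where
  "fle f g \<longleftrightarrow> (\<forall>\<phi>\<in>L1dual. f \<phi> \<le> g \<phi>)"

definition is_sup_in_FBL :: "hfun set \<Rightarrow> hfun \<Rightarrow> bool" where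
  "is_sup_in_FBL F y \<longleftrightarrow> y \<in> FBL \<and> (\<forall>x\<in>F. fle x y) \<and>
     (\<forall>z\<in>FBL. (\<forall>x\<in>F. fle x z) \<longrightarrow> fle y z)"

end

theory Submission
  imports Defs
begin

text \<open>The approximants \<open>f\<^sub>N = |\<delta>\<^sub>1| \<and> \<onehalf> max\<^sub>n\<^sub>\<le>\<^sub>N |\<delta>\<^bsub>r\<^sub>n\<^esub>|\<close>, with \<open>r\<^sub>n\<close> the Rademacher functions,
  increase and have FBL-norm at most \<open>\<onehalf>\<close>: every \<open>r\<^sub>n\<close> with \<open>n < L\<close> is a \<open>\<plusminus>1\<close>-combination of the
  \<open>2\<^sup>L\<close> dyadic indicators of level \<open>L\<close>, and a normalised family of functionals spends at most
  \<open>2\<^sup>-\<^sup>L\<close> on each of them. Nevertheless \<open>|\<delta>\<^sub>1|\<close>, of norm \<open>1\<close>, is their least upper bound in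
  \<open>FBL[L\<^sub>1]\<close>. Elements of \<open>FBL\<close> are uniform limits of lattice expressions in finitely many
  \<open>\<delta>\<^sub>x\<close>, hence continuous along norm-bounded weak*-convergent sequences of functionals. By the
  Riemann--Lebesgue property of the Rademacher system, \<open>\<psi>\<^sub>m = \<phi> + t \<integral>(\<cdot>) r\<^sub>m\<close> converges weak* to
  \<open>\<phi>\<close>, while \<open>\<psi>\<^sub>m(r\<^sub>m) \<ge> t - \<parallel>\<phi>\<parallel>\<close>; for large \<open>t\<close> this gives \<open>f\<^sub>m(\<psi>\<^sub>m) \<ge> min |\<psi>\<^sub>m(1)| |\<phi>(1)|\<close>,
  and an upper bound \<open>z\<close> of all \<open>f\<^sub>N\<close> therefore satisfies \<open>z(\<phi>) \<ge> |\<phi>(1)|\<close>.\<close>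

section \<open>Dyadic intervals and Rademacher functions\<close>

abbreviation leb01 :: "real measure" where
  "leb01 \<equiv> lebesgue_on {0..1}"

text \<open>The \<open>min\<close> puts \<open>t = 1\<close> into the last dyadic interval \<open>[1 - 2\<^sup>-\<^sup>L, 1]\<close>.\<close>

definition dyadic_index :: "nat \<Rightarrow> real \<Rightarrow> nat" where
  "dyadic_index L t = min (nat \<lfloor>2^L * t\<rfloor>) (2^L - 1)"

definition dyadic_indicator :: "nat \<Rightarrow> nat \<Rightarrow> real \<Rightarrow> real" where
  "dyadic_indicator L j = indicator {t. dyadic_index L t = j}"

definition rademacher :: "nat \<Rightarrow> real \<Rightarrow> real" where
  "rademacher m t = (if even (dyadic_index (Suc m) t) then 1 else -1)"

lemma measurable_dyadic_index [measurable]: "dyadic_index L \<in> borel \<rightarrow>\<^sub>M count_space UNIV"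
  unfolding dyadic_index_def by measurable

lemma borel_measurable_dyadic_indicator [measurable]: "dyadic_indicator L j \<in> borel_measurable borel"
  unfolding dyadic_indicator_def by measurable

lemma borel_measurable_rademacher [measurable]: "rademacher m \<in> borel_measurable borel"
  unfolding rademacher_def by measurable

lemma dyadic_index_less: "dyadic_index L t < 2^L"
  unfolding dyadic_index_def by (simp add: min_less_iff_disj)

lemma sum_dyadic_indicator: "(\<Sum>j<2^L. s j * dyadic_indicator L j t) = s (dyadic_index L t)"
  using dyadic_index_less[of L t] by (simp add: dyadic_indicator_def indicator_def if_distrib sum.delta)

lemma dyadic_index_coarsen:
  assumes "K \<le> L"
  shows "dyadic_index K t = dyadic_index L t div 2^(L - K)"
proof -
  define q :: nat where "q = 2^(L - K)"
  have q: "q > 0" and LK: "(2::nat)^L = 2^K * q"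
    unfolding q_def using assms by (simp_all add: power_add[symmetric])
  have top: "(2^K * q - 1) div q = 2^K - 1"
  proof -
    have "2^K * q - 1 = (q - 1) + (2^K - 1) * q"
      using q by (simp add: algebra_simps)
    moreover have "((q - 1) + (2^K - 1) * q) div q = 2^K - 1"
      using q by (subst div_mult_self1) auto
    ultimately show ?thesis by simp
  qed
  define a where "a = \<lfloor>2^L * t\<rfloor>"
  have "(2::real)^L = 2^K * real q"
    using arg_cong[OF LK, of real] by simp
  then have "(2::real)^K * t = (2^L * t) / real_of_int (int q)"
    using q by (simp add: field_simps)
  then have floor_K: "\<lfloor>2^K * t\<rfloor> = a div int q"
    unfolding a_def using floor_divide_real_eq_div[of "int q" "2^L * t"] by simp
  show ?thesis
  proof (cases "a < 0")
    case True
    then have "a div int q < 0" using q by (simp add: div_neg_pos_less0)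
    then show ?thesis using True floor_K unfolding dyadic_index_def a_def[symmetric] by simp
  next
    case False
    define n where "n = nat a"
    have "dyadic_index K t = min (n div q) (2^K - 1)"
      unfolding dyadic_index_def floor_K n_def using False by (simp add: nat_div_distrib)
    moreover have "dyadic_index L t = min n (2^L - 1)"
      unfolding dyadic_index_def a_def[symmetric] n_def ..
    moreover have "min (n div q) (2^K - 1) = min n (2^L - 1) div q"
    proof (cases "n \<le> 2^L - 1")
      case True
      then have "n div q \<le> 2^K - 1" using div_le_mono[OF True, of q] top LK by simp
      then show ?thesis using True by simp
    next
      case False
      then have "2^K \<le> n div q" using LK q by (simp add: less_eq_div_iff_mult_less_eq)
      then show ?thesis using False LK top by simp
    qed
    ultimately show ?thesis unfolding q_def by simp
  qed
qed

lemma rademacher_dyadic_index: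
  "m < L \<Longrightarrow> rademacher m t = (if even (dyadic_index L t div 2^(L - Suc m)) then 1 else -1)"
  unfolding rademacher_def using dyadic_index_coarsen[of "Suc m" L t] by simp

lemma abs_rademacher [simp]: "\<bar>rademacher m t\<bar> = 1"
  by (simp add: rademacher_def)

lemma rademacher_square [simp]: "rademacher m t * rademacher m t = 1"
  by (simp add: rademacher_def)

lemma dyadic_index_eq_iff:
  assumes "0 \<le> t" "j + 1 < 2^L"
  shows "dyadic_index L t = j \<longleftrightarrow> real j \<le> 2^L * t \<and> 2^L * t < real j + 1"
proof -
  have "dyadic_index L t = j \<longleftrightarrow> \<lfloor>2^L * t\<rfloor> = int j"
    unfolding dyadic_index_def using assms by (auto simp: min_def)
  then show ?thesis by (simp add: floor_eq_iff)
qed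

lemma dyadic_index_eq_last_iff:
  assumes "0 \<le> t"
  shows "dyadic_index L t = 2^L - 1 \<longleftrightarrow> real (2^L - 1) \<le> 2^L * t"
proof -
  have "dyadic_index L t = 2^L - 1 \<longleftrightarrow> nat \<lfloor>2^L * t\<rfloor> \<ge> 2^L - 1"
    unfolding dyadic_index_def by (auto simp: min_def)
  also have "\<dots> \<longleftrightarrow> \<lfloor>2^L * t\<rfloor> \<ge> int (2^L - 1)"
    using assms by (auto simp: le_nat_iff)
  finally show ?thesis by (metis le_floor_iff of_int_of_nat_eq)
qed

lemma dyadic_cell:
  assumes "j + 1 < 2^L"
  shows "{t. dyadic_index L t = j} \<inter> {0..1} = {real j / 2^L..<(real j + 1) / 2^L}"
proof (intro set_eqI iffI)
  have lower: "real j / 2^L \<le> t \<longleftrightarrow> real j \<le> 2^L * t" for t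
    by (simp add: pos_divide_le_eq mult.commute)
  have upper: "t < (real j + 1) / 2^L \<longleftrightarrow> 2^L * t < real j + 1" for t
    by (simp add: pos_less_divide_eq mult.commute)
  fix t
  {
    assume "t \<in> {t. dyadic_index L t = j} \<inter> {0..1}"
    then show "t \<in> {real j / 2^L..<(real j + 1) / 2^L}"
      using dyadic_index_eq_iff[OF _ assms] lower upper by auto
  next
    assume t: "t \<in> {real j / 2^L..<(real j + 1) / 2^L}"
    have "real (j + 1) \<le> real ((2::nat)^L)"
      using assms by (intro of_nat_mono) simp
    then have "(real j + 1) / 2^L \<le> 1" by simp
    moreover have "0 \<le> real j / 2^L" by simp
    ultimately have "0 \<le> t" "t \<le> 1"
      using t unfolding atLeastLessThan_iff by linarith+
    then show "t \<in> {t. dyadic_index L t = j} \<inter> {0..1}"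
      using t dyadic_index_eq_iff[OF _ assms] lower upper by auto
  }
qed

lemma dyadic_last_cell:
  "{t. dyadic_index L t = 2^L - 1} \<inter> {0..1} = {real (2^L - 1) / 2^L..1}"
proof (intro set_eqI iffI)
  have lower: "real (2^L - 1) / 2^L \<le> t \<longleftrightarrow> real (2^L - 1) \<le> 2^L * t" for t
    by (simp add: pos_divide_le_eq mult.commute)
  fix t
  {
    assume "t \<in> {t. dyadic_index L t = 2^L - 1} \<inter> {0..1}"
    then show "t \<in> {real (2^L - 1) / 2^L..1}"
      using dyadic_index_eq_last_iff lower by auto
  next
    assume t: "t \<in> {real (2^L - 1) / 2^L..1}"
    have "0 \<le> real (2^L - 1) / (2::real)^L" by (intro divide_nonneg_pos) auto
    then have "0 \<le> t" using t unfolding atLeastAtMost_iff by linarith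
    then show "t \<in> {t. dyadic_index L t = 2^L - 1} \<inter> {0..1}"
      using t dyadic_index_eq_last_iff lower by auto
  }
qed

lemma measure_dyadic_cell:
  assumes "j < 2^L"
  shows "measure leb01 ({t. dyadic_index L t = j} \<inter> {0..1}) = 1 / 2^L"
proof -
  have restrict: "measure leb01 A = measure lborel A" if "A \<subseteq> {0..1}" "A \<in> sets lborel" for A
    using that by (subst measure_restrict_space) auto
  show ?thesis
  proof (cases "j + 1 < 2^L")
    case True
    have "real j / 2^L \<le> (real j + 1) / 2^L"
      by (simp add: divide_right_mono)
    then have "measure lborel {real j / 2^L..<(real j + 1) / 2^L} = 1 / 2^L"
      by (simp add: diff_divide_distrib[symmetric])
    moreover have "{real j / 2^L..<(real j + 1) / 2^L} \<subseteq> {0..1}"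
      using dyadic_cell[OF True] by blast
    ultimately show ?thesis
      using restrict[of "{real j / 2^L..<(real j + 1) / 2^L}"] dyadic_cell[OF True] by simp
  next
    case False
    then have j: "j = 2^L - 1" using assms by simp
    have "real (2^L - 1) = (2::real)^L - 1" by (simp add: of_nat_diff)
    then have "measure lborel {real (2^L - 1) / 2^L..1} = 1 / 2^L"
      by (simp add: diff_divide_distrib)
    moreover have "{real (2^L - 1) / 2^L..1} \<subseteq> {0..1::real}"
      using dyadic_last_cell[of L] by blast
    ultimately show ?thesis
      using restrict[of "{real (2^L - 1) / 2^L..1}"] dyadic_last_cell[of L] unfolding j by simp
  qed
qed

lemma L1_iff [simp]: "f \<in> L1 \<longleftrightarrow> integrable leb01 f"
  by (simp add: L1_def)

lemma borel_measurable_leb01I: "f \<in> borel_measurable borel \<Longrightarrow> f \<in> borel_measurable leb01"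
  for f :: "real \<Rightarrow> real"
  by (metis measurable_lborel2 measurable_restrict_space1 measurable_completion)

lemma integrable_leb01_bounded:
  fixes f :: "real \<Rightarrow> real"
  assumes "f \<in> borel_measurable leb01" "\<And>t. t \<in> {0..1} \<Longrightarrow> \<bar>f t\<bar> \<le> B"
  shows "integrable leb01 f"
proof -
  have "finite_measure leb01"
    by (metis cbox_interval finite_measure_lebesgue_on lmeasurable_cbox)
  moreover have "AE t in leb01. norm (f t) \<le> B"
    using assms(2) by (intro AE_I2) auto
  ultimately show ?thesis
    using finite_measure.integrable_const_bound assms(1) by blast
qed

lemma integrable_mult_bounded:
  fixes f w :: "real \<Rightarrow> real"
  assumes f: "integrable leb01 f" and w: "w \<in> borel_measurable leb01"
    and B: "\<And>t. t \<in> {0..1} \<Longrightarrow> \<bar>w t\<bar> \<le> B"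
  shows "integrable leb01 (\<lambda>t. f t * w t)"
proof (rule Bochner_Integration.integrable_bound)
  show "integrable leb01 (\<lambda>t. B * \<bar>f t\<bar>)" using f by auto
  show "(\<lambda>t. f t * w t) \<in> borel_measurable leb01" using f w by measurable
  show "AE t in leb01. norm (f t * w t) \<le> norm (B * \<bar>f t\<bar>)"
  proof (rule AE_I2)
    fix t assume "t \<in> space leb01"
    then have "\<bar>w t\<bar> \<le> B" using B by simp
    then show "norm (f t * w t) \<le> norm (B * \<bar>f t\<bar>)"
      by (simp add: abs_mult mult.commute[of B] mult_left_mono)
  qed
qed

lemma measure_leb01 [simp]: "measure leb01 {0..1} = 1"
  by (simp add: measure_restrict_space)

lemma integrable_rademacher [simp]: "integrable leb01 (rademacher m)"
  by (rule integrable_leb01_bounded[where B=1]) (auto intro: borel_measurable_leb01I)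

lemma integrable_mult_rademacher [simp]:
  "integrable leb01 f \<Longrightarrow> integrable leb01 (\<lambda>t. f t * rademacher m t)"
  by (rule integrable_mult_bounded[where B=1]) (auto intro: borel_measurable_leb01I)

lemma integrable_dyadic_indicator [simp]: "integrable leb01 (dyadic_indicator L j)"
  by (rule integrable_leb01_bounded[where B=1])
     (auto intro: borel_measurable_leb01I simp: dyadic_indicator_def)

lemma integral_dyadic_indicator:
  assumes "j < 2^L"
  shows "(LINT t|leb01. dyadic_indicator L j t) = 1 / 2^L"
  using measure_dyadic_cell[OF assms] by (simp add: dyadic_indicator_def)

lemma integral_dyadic_step:
  fixes s :: "nat \<Rightarrow> real"
  shows "(LINT t|leb01. s (dyadic_index L t)) = (\<Sum>j<2^L. s j) / 2^L"
proof -
  have "(LINT t|leb01. s (dyadic_index L t)) = (LINT t|leb01. (\<Sum>j<2^L. s j * dyadic_indicator L j t))"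
    by (simp add: sum_dyadic_indicator)
  also have "\<dots> = (\<Sum>j<2^L. s j * (LINT t|leb01. dyadic_indicator L j t))"
    by (simp add: Bochner_Integration.integral_sum)
  also have "\<dots> = (\<Sum>j<2^L. s j / 2^L)"
    by (rule sum.cong) (auto simp: integral_dyadic_indicator)
  finally show ?thesis by (simp add: sum_divide_distrib)
qed

lemma integral_rademacher_product_less:
  assumes "m < n"
  shows "(LINT t|leb01. rademacher m t * rademacher n t) = 0"
proof -
  define s :: "nat \<Rightarrow> real" where
    "s j = (if even (j div 2^(n - m)) then 1 else -1) * (if even j then 1 else -1)" for j
  have "rademacher m t * rademacher n t = s (dyadic_index (Suc n) t)" for t
    using rademacher_dyadic_index[of m "Suc n" t] rademacher_dyadic_index[of n "Suc n" t] assms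
    unfolding s_def by (simp add: Suc_diff_le)
  moreover have "(\<Sum>j<2 * k. s j) = (\<Sum>i<k. s (2 * i) + s (2 * i + 1))" for k
    by (induction k) (auto simp: lessThan_Suc)
  ultimately have "(LINT t|leb01. rademacher m t * rademacher n t)
      = (\<Sum>i<2^n. s (2 * i) + s (2 * i + 1)) / 2^Suc n"
    using integral_dyadic_step[of s "Suc n"] by simp
  also have "\<dots> = 0"
  proof -
    \<comment> \<open>\<open>2i\<close> and \<open>2i + 1\<close> have opposite parity but lie in the same block of length \<open>2^(n - m)\<close>\<close>
    have "(2::nat)^(n - m) = 2 * 2^(n - m - 1)"
      using assms by (simp flip: power_Suc add: Suc_diff_Suc)
    then have "(2 * i + 1) div 2^(n - m) = (2 * i) div 2^(n - m)" for i :: nat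
      by (simp add: div_mult2_eq)
    then show ?thesis by (simp add: s_def)
  qed
  finally show ?thesis by simp
qed

lemma integral_rademacher_product:
  "(LINT t|leb01. rademacher m t * rademacher n t) = (if m = n then 1 else 0)"
  using integral_rademacher_product_less[of m n] integral_rademacher_product_less[of n m]
  by (cases m n rule: linorder_cases) (simp_all add: mult.commute)

section \<open>Riemann--Lebesgue property of the Rademacher system\<close>

lemma bessel_rademacher:
  assumes x: "integrable leb01 x" and x2: "integrable leb01 (\<lambda>t. x t * x t)"
  shows "(\<Sum>m<M. (LINT t|leb01. x t * rademacher m t)\<^sup>2) \<le> (LINT t|leb01. x t * x t)"
proof -
  define a where "a m = (LINT t|leb01. x t * rademacher m t)" for m
  define P where "P t = (\<Sum>m<M. a m * rademacher m t)" for t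
  have int_xP: "integrable leb01 (\<lambda>t. x t * P t)" and int_PP: "integrable leb01 (\<lambda>t. P t * P t)"
    using x by (simp_all add: P_def sum_distrib_left sum_product algebra_simps)
  have "(\<lambda>t. x t * P t) = (\<lambda>t. \<Sum>m<M. a m * (x t * rademacher m t))"
    by (simp add: P_def sum_distrib_left algebra_simps)
  then have xP: "(LINT t|leb01. x t * P t) = (\<Sum>m<M. a m * a m)"
    using x by (simp add: a_def)
  have "(LINT t|leb01. P t * P t)
      = (\<Sum>m<M. \<Sum>n<M. a m * a n * (LINT t|leb01. rademacher m t * rademacher n t))"
    by (simp add: P_def sum_product algebra_simps)
  then have PP: "(LINT t|leb01. P t * P t) = (\<Sum>m<M. a m * a m)"
    by (simp add: integral_rademacher_product if_distrib cong: if_cong)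
  have "(\<lambda>t. (x t - P t)\<^sup>2) = (\<lambda>t. x t * x t - 2 * (x t * P t) + P t * P t)"
    by (simp add: power2_eq_square algebra_simps)
  then have "(LINT t|leb01. (x t - P t)\<^sup>2)
      = (LINT t|leb01. x t * x t) - 2 * (LINT t|leb01. x t * P t) + (LINT t|leb01. P t * P t)"
    using x2 int_xP int_PP by simp
  moreover have "0 \<le> (LINT t|leb01. (x t - P t)\<^sup>2)"
    by simp
  ultimately have "(\<Sum>m<M. a m * a m) \<le> (LINT t|leb01. x t * x t)"
    unfolding xP PP by linarith
  then show ?thesis
    by (simp add: a_def power2_eq_square)
qed

lemma tendsto_rademacher_coeff_square_integrable:
  assumes "integrable leb01 x" "integrable leb01 (\<lambda>t. x t * x t)"
  shows "(\<lambda>m. LINT t|leb01. x t * rademacher m t) \<longlonglongrightarrow> 0"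
proof -
  have "summable (\<lambda>m. (LINT t|leb01. x t * rademacher m t)\<^sup>2)"
    using bessel_rademacher[OF assms] by (intro summableI_nonneg_bounded) auto
  then have "(\<lambda>m. sqrt ((LINT t|leb01. x t * rademacher m t)\<^sup>2)) \<longlonglongrightarrow> sqrt 0"
    by (intro tendsto_real_sqrt summable_LIMSEQ_zero)
  then show ?thesis
    by (simp add: tendsto_rabs_zero_iff)
qed

lemma tendsto_integral_truncation:
  assumes x: "integrable leb01 x"
  shows "(\<lambda>k. LINT t|leb01. \<bar>x t - max (- real k) (min (real k) (x t))\<bar>) \<longlonglongrightarrow> 0"
proof -
  have "(\<lambda>k. LINT t|leb01. \<bar>x t - max (- real k) (min (real k) (x t))\<bar>) \<longlonglongrightarrow> (LINT t|leb01. 0)"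
  proof (rule integral_dominated_convergence[where w="\<lambda>t. \<bar>x t\<bar>"])
    show "AE t in leb01. (\<lambda>k. \<bar>x t - max (- real k) (min (real k) (x t))\<bar>) \<longlonglongrightarrow> 0"
    proof (rule AE_I2)
      fix t
      have "\<forall>k\<ge>nat \<lceil>\<bar>x t\<bar>\<rceil>. \<bar>x t - max (- real k) (min (real k) (x t))\<bar> = 0"
        by (auto simp: max_def min_def)
      then have "eventually (\<lambda>k. \<bar>x t - max (- real k) (min (real k) (x t))\<bar> = 0) sequentially"
        unfolding eventually_sequentially by blast
      then show "(\<lambda>k. \<bar>x t - max (- real k) (min (real k) (x t))\<bar>) \<longlonglongrightarrow> 0"
        by (rule tendsto_eventually)
    qed
  qed (use x in \<open>auto simp: max_def min_def\<close>)
  then show ?thesis by simp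
qed

lemma tendsto_rademacher_coeff:
  assumes x: "integrable leb01 x"
  shows "(\<lambda>m. LINT t|leb01. x t * rademacher m t) \<longlonglongrightarrow> 0"
proof (rule LIMSEQ_I)
  fix r :: real assume "0 < r"
  define y where "y k t = max (- real k) (min (real k) (x t))" for k t
  obtain k where k: "(LINT t|leb01. \<bar>x t - y k t\<bar>) < r / 2"
    using LIMSEQ_D[OF tendsto_integral_truncation[OF x], of "r / 2"] \<open>0 < r\<close>
    by (auto simp: y_def)
  have y_meas: "y k \<in> borel_measurable leb01"
    using x unfolding y_def by measurable
  have y_bound: "\<bar>y k t\<bar> \<le> real k" for t
    by (auto simp: y_def max_def min_def)
  have y_int: "integrable leb01 (y k)" and y2_int: "integrable leb01 (\<lambda>t. y k t * y k t)"
    using integrable_leb01_bounded[OF y_meas y_bound]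
      integrable_mult_bounded[OF integrable_leb01_bounded[OF y_meas y_bound] y_meas y_bound]
    by auto
  obtain N where N: "\<And>m. m \<ge> N \<Longrightarrow> \<bar>LINT t|leb01. y k t * rademacher m t\<bar> < r / 2"
    using LIMSEQ_D[OF tendsto_rademacher_coeff_square_integrable[OF y_int y2_int], of "r / 2"] \<open>0 < r\<close>
    by auto
  have "\<bar>LINT t|leb01. x t * rademacher m t\<bar> < r" if "m \<ge> N" for m
  proof -
    have "(LINT t|leb01. x t * rademacher m t)
        = (LINT t|leb01. y k t * rademacher m t + (x t - y k t) * rademacher m t)"
      by (simp add: algebra_simps)
    also have "\<dots> = (LINT t|leb01. y k t * rademacher m t) + (LINT t|leb01. (x t - y k t) * rademacher m t)"
      using x y_int by (intro Bochner_Integration.integral_add integrable_mult_rademacher) auto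
    finally have split: "(LINT t|leb01. x t * rademacher m t)
        = (LINT t|leb01. y k t * rademacher m t) + (LINT t|leb01. (x t - y k t) * rademacher m t)" .
    have "\<bar>LINT t|leb01. (x t - y k t) * rademacher m t\<bar> \<le> (LINT t|leb01. \<bar>x t - y k t\<bar>)"
      using integral_abs_bound[of leb01 "\<lambda>t. (x t - y k t) * rademacher m t"] by (simp add: abs_mult)
    with split show ?thesis
      using N[OF that] k by linarith
  qed
  then show "\<exists>N. \<forall>m\<ge>N. norm ((LINT t|leb01. x t * rademacher m t) - 0) < r"
    by auto
qed

lemma L1norm_nonneg: "0 \<le> L1norm f"
  by (simp add: L1norm_def)

lemma L1norm_cmult: "L1norm (\<lambda>t. c * f t) = \<bar>c\<bar> * L1norm f"
  by (simp add: L1norm_def abs_mult)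

lemma L1norm_one [simp]: "L1norm (\<lambda>t. 1) = 1"
  by (simp add: L1norm_def)

lemma L1norm_rademacher [simp]: "L1norm (rademacher m) = 1"
  by (simp add: L1norm_def)

lemma L1norm_dyadic_indicator: "j < 2^L \<Longrightarrow> L1norm (dyadic_indicator L j) = 1 / 2^L"
  using integral_dyadic_indicator by (simp add: L1norm_def dyadic_indicator_def)

lemma L1dualD:
  assumes "\<phi> \<in> L1dual"
  shows L1dual_add: "integrable leb01 f \<Longrightarrow> integrable leb01 g \<Longrightarrow> \<phi> (\<lambda>t. f t + g t) = \<phi> f + \<phi> g"
    and L1dual_cmult: "integrable leb01 f \<Longrightarrow> \<phi> (\<lambda>t. c * f t) = c * \<phi> f"
  using assms by (auto simp: L1dual_def)

lemma L1dual_bound: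
  assumes "\<phi> \<in> L1dual"
  obtains C where "0 < C" "\<And>f. integrable leb01 f \<Longrightarrow> \<bar>\<phi> f\<bar> \<le> C * L1norm f"
proof -
  obtain C where C: "\<And>f. integrable leb01 f \<Longrightarrow> \<bar>\<phi> f\<bar> \<le> C * L1norm f"
    using assms by (auto simp: L1dual_def L1_def)
  have "\<bar>\<phi> f\<bar> \<le> max C 1 * L1norm f" if "integrable leb01 f" for f
    using C[OF that] mult_right_mono[OF max.cobounded1[of C 1] L1norm_nonneg[of f]] by linarith
  moreover have "0 < max C 1"
    by (simp add: max.strict_coboundedI2)
  ultimately show ?thesis using that by blast
qed

lemma L1dual_zero: "\<phi> \<in> L1dual \<Longrightarrow> \<phi> (\<lambda>t. 0) = 0"
  using L1dual_cmult[of \<phi> "\<lambda>t. 0" 0] by simp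

lemma L1dual_sum:
  assumes \<phi>: "\<phi> \<in> L1dual" and "finite J" "\<And>j. j \<in> J \<Longrightarrow> integrable leb01 (f j)"
  shows "\<phi> (\<lambda>t. \<Sum>j\<in>J. c j * f j t) = (\<Sum>j\<in>J. c j * \<phi> (f j))"
  using assms(2,3)
proof (induction J rule: finite_induct)
  case empty
  then show ?case using L1dual_zero[OF \<phi>] by simp
next
  case (insert a J)
  then show ?case
    using L1dual_add[OF \<phi>, of "\<lambda>t. c a * f a t" "\<lambda>t. \<Sum>j\<in>J. c j * f j t"] L1dual_cmult[OF \<phi>]
    by simp
qed

lemma L1dual_lincomb:
  assumes \<phi>: "\<phi> \<in> L1dual" and \<rho>: "\<rho> \<in> L1dual"
  shows "(\<lambda>g. a * \<phi> g + b * \<rho> g) \<in> L1dual"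
proof -
  obtain C where C: "\<And>f. integrable leb01 f \<Longrightarrow> \<bar>\<phi> f\<bar> \<le> C * L1norm f"
    using L1dual_bound[OF \<phi>] by blast
  obtain D where D: "\<And>f. integrable leb01 f \<Longrightarrow> \<bar>\<rho> f\<bar> \<le> D * L1norm f"
    using L1dual_bound[OF \<rho>] by blast
  have "\<bar>a * \<phi> f + b * \<rho> f\<bar> \<le> (\<bar>a\<bar> * C + \<bar>b\<bar> * D) * L1norm f" if "integrable leb01 f" for f
  proof -
    have "\<bar>a * \<phi> f + b * \<rho> f\<bar> \<le> \<bar>a\<bar> * \<bar>\<phi> f\<bar> + \<bar>b\<bar> * \<bar>\<rho> f\<bar>"
      by (metis abs_mult abs_triangle_ineq)
    also have "\<dots> \<le> \<bar>a\<bar> * (C * L1norm f) + \<bar>b\<bar> * (D * L1norm f)"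
      using C[OF that] D[OF that] by (intro add_mono mult_left_mono) auto
    finally show ?thesis by (simp add: algebra_simps)
  qed
  then have "\<exists>K. \<forall>f\<in>L1. \<bar>a * \<phi> f + b * \<rho> f\<bar> \<le> K * L1norm f"
    by (intro exI[of _ "\<bar>a\<bar> * C + \<bar>b\<bar> * D"]) auto
  moreover have "(\<lambda>g. a * \<phi> g + b * \<rho> g) (\<lambda>t. f t + g t)
      = (\<lambda>g. a * \<phi> g + b * \<rho> g) f + (\<lambda>g. a * \<phi> g + b * \<rho> g) g"
    if "integrable leb01 f" "integrable leb01 g" for f g
    using L1dual_add[OF \<phi> that] L1dual_add[OF \<rho> that] by (simp add: algebra_simps)
  moreover have "(\<lambda>g. a * \<phi> g + b * \<rho> g) (\<lambda>t. c * f t) = c * (\<lambda>g. a * \<phi> g + b * \<rho> g) f"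
    if "integrable leb01 f" for c f
    using L1dual_cmult[OF \<phi> that] L1dual_cmult[OF \<rho> that] by (simp add: algebra_simps)
  moreover have "a * \<phi> f + b * \<rho> f = 0" if "\<not> integrable leb01 f" for f
    using \<phi> \<rho> that by (simp add: L1dual_def)
  ultimately show ?thesis
    unfolding L1dual_def Ball_def L1_iff by blast
qed

lemma L1dual_scaled: "\<phi> \<in> L1dual \<Longrightarrow> (\<lambda>g. r * \<phi> g) \<in> L1dual"
  using L1dual_lincomb[of \<phi> \<phi> r 0] by simp

definition weighted_integral :: "(real \<Rightarrow> real) \<Rightarrow> (real \<Rightarrow> real) \<Rightarrow> real" where
  "weighted_integral w g = (if integrable leb01 g then LINT t|leb01. g t * w t else 0)"

context
  fixes w :: "real \<Rightarrow> real"
  assumes w_meas: "w \<in> borel_measurable leb01" and w_bound: "\<And>t. t \<in> {0..1} \<Longrightarrow> \<bar>w t\<bar> \<le> 1"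
begin

lemma abs_weighted_integral_le: "\<bar>weighted_integral w g\<bar> \<le> L1norm g"
proof (cases "integrable leb01 g")
  case True
  have "\<bar>LINT t|leb01. g t * w t\<bar> \<le> (LINT t|leb01. \<bar>g t * w t\<bar>)"
    by (rule integral_abs_bound)
  also have "\<dots> \<le> (LINT t|leb01. \<bar>g t\<bar>)"
  proof (rule integral_mono)
    show "integrable leb01 (\<lambda>t. \<bar>g t * w t\<bar>)"
      using integrable_mult_bounded[OF True w_meas w_bound] by simp
    show "\<bar>g t * w t\<bar> \<le> \<bar>g t\<bar>" if "t \<in> space leb01" for t
      using w_bound[of t] that by (simp add: abs_mult mult_left_le)
  qed (use True in simp)
  finally show ?thesis
    using True by (simp add: weighted_integral_def L1norm_def)
qed (simp add: weighted_integral_def L1norm_nonneg)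

lemma weighted_integral_L1dual: "weighted_integral w \<in> L1dual"
proof -
  have int: "integrable leb01 (\<lambda>t. g t * w t)" if "integrable leb01 g" for g
    using integrable_mult_bounded[OF that w_meas w_bound] .
  show ?thesis
    unfolding L1dual_def
  proof (intro CollectI conjI ballI allI impI exI[of _ 1])
    show "\<bar>weighted_integral w g\<bar> \<le> 1 * L1norm g" for g
      using abs_weighted_integral_le by simp
  qed (auto simp: weighted_integral_def int distrib_right mult.assoc)
qed

end

lemma rademacher_functional_L1dual: "weighted_integral (rademacher m) \<in> L1dual"
  and abs_rademacher_functional_le: "\<bar>weighted_integral (rademacher m) g\<bar> \<le> L1norm g"
  by (rule weighted_integral_L1dual abs_weighted_integral_le;
      auto intro: borel_measurable_leb01I)+

definition fbl_admissible :: "nat \<Rightarrow> (nat \<Rightarrow> (real \<Rightarrow> real) \<Rightarrow> real) \<Rightarrow> bool" where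
  "fbl_admissible n xs \<longleftrightarrow> (\<forall>k<n. xs k \<in> L1dual) \<and>
     (\<forall>g\<in>L1. L1norm g \<le> 1 \<longrightarrow> (\<Sum>k<n. \<bar>xs k g\<bar>) \<le> 1)"

lemma fbl_enorm_altdef:
  "fbl_enorm f = (SUP p \<in> {(n, xs). fbl_admissible n xs}. ereal (\<Sum>k<fst p. \<bar>f (snd p k)\<bar>))"
  unfolding fbl_enorm_def fbl_admissible_def by (rule arg_cong[of _ _ "\<lambda>A. Sup (_ ` A)"]) auto

lemma fbl_enorm_ge: "fbl_admissible n xs \<Longrightarrow> ereal (\<Sum>k<n. \<bar>f (xs k)\<bar>) \<le> fbl_enorm f"
  unfolding fbl_enorm_altdef by (rule SUP_upper2[of "(n, xs)"]) auto

lemma fbl_enorm_le: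
  "(\<And>n xs. fbl_admissible n xs \<Longrightarrow> (\<Sum>k<n. \<bar>f (xs k)\<bar>) \<le> c) \<Longrightarrow> fbl_enorm f \<le> ereal c"
  unfolding fbl_enorm_altdef by (rule SUP_least) auto

lemma fbl_enorm_zero: "fbl_enorm (\<lambda>\<phi>. 0) = 0"
  using fbl_enorm_le[of "\<lambda>\<phi>. 0" 0] fbl_enorm_ge[of 0 undefined "\<lambda>\<phi>. 0"]
  by (simp add: fbl_admissible_def zero_ereal_def)

lemma fbl_admissible_sum_le:
  assumes adm: "fbl_admissible n xs" and g: "integrable leb01 g"
  shows "(\<Sum>k<n. \<bar>xs k g\<bar>) \<le> L1norm g"
proof (cases "L1norm g = 0")
  case True
  have "xs k g = 0" if "k < n" for k
  proof -
    obtain C where "\<And>f. integrable leb01 f \<Longrightarrow> \<bar>xs k f\<bar> \<le> C * L1norm f"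
      using L1dual_bound adm \<open>k < n\<close> unfolding fbl_admissible_def by metis
    then show ?thesis using g True by fastforce
  qed
  then show ?thesis using True by simp
next
  case False
  define N where "N = L1norm g"
  have N: "0 < N" using False L1norm_nonneg[of g] unfolding N_def by linarith
  have "L1norm (\<lambda>t. (1 / N) * g t) = 1"
    using N L1norm_cmult[of "1 / N" g] by (simp add: N_def)
  then have "(\<Sum>k<n. \<bar>xs k (\<lambda>t. (1 / N) * g t)\<bar>) \<le> 1"
    using adm g unfolding fbl_admissible_def by auto
  moreover have "xs k (\<lambda>t. (1 / N) * g t) = (1 / N) * xs k g" if "k < n" for k
    using L1dual_cmult[of "xs k" g "1 / N"] adm that g unfolding fbl_admissible_def by auto
  ultimately have "(1 / N) * (\<Sum>k<n. \<bar>xs k g\<bar>) \<le> 1"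
    using N by (simp add: abs_mult sum_distrib_left)
  then show ?thesis using N by (simp add: N_def field_simps)
qed

lemma fbl_admissible_single:
  assumes "\<psi> \<in> L1dual" "\<And>f. integrable leb01 f \<Longrightarrow> \<bar>\<psi> f\<bar> \<le> L1norm f"
  shows "fbl_admissible 1 (\<lambda>k. \<psi>)"
  using assms(1) order_trans[OF assms(2)] unfolding fbl_admissible_def by auto

lemma abs_le_fbl_enorm:
  assumes w: "pos_homogeneous w" and \<psi>: "\<psi> \<in> L1dual" and "0 < B"
    and \<psi>_bound: "\<And>f. integrable leb01 f \<Longrightarrow> \<bar>\<psi> f\<bar> \<le> B * L1norm f"
    and e: "fbl_enorm w \<le> ereal e"
  shows "\<bar>w \<psi>\<bar> \<le> B * e"
proof -
  define \<psi>' where "\<psi>' = (\<lambda>g. (1 / B) * \<psi> g)"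
  have "fbl_admissible 1 (\<lambda>k. \<psi>')"
  proof (rule fbl_admissible_single)
    show "\<psi>' \<in> L1dual" unfolding \<psi>'_def by (rule L1dual_scaled[OF \<psi>])
    show "\<bar>\<psi>' f\<bar> \<le> L1norm f" if "integrable leb01 f" for f
      using \<psi>_bound[OF that] \<open>0 < B\<close> by (simp add: \<psi>'_def abs_mult field_simps)
  qed
  from order_trans[OF fbl_enorm_ge[OF this, of w] e] have "\<bar>w \<psi>'\<bar> \<le> e" by simp
  moreover have "w \<psi>' = (1 / B) * w \<psi>"
    using w \<psi> \<open>0 < B\<close> unfolding pos_homogeneous_def \<psi>'_def by (meson divide_pos_pos zero_less_one)
  ultimately show ?thesis using \<open>0 < B\<close> by (simp add: abs_mult field_simps)
qed

section \<open>The generated sublattice and weak*-continuity\<close>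

lemma fbl_gen_extensional: "f \<in> fbl_gen \<Longrightarrow> extensional_dual f"
  unfolding extensional_dual_def by (induction f rule: fbl_gen.induct) (auto simp: delta_def)

lemma fbl_gen_pos_homogeneous: "f \<in> fbl_gen \<Longrightarrow> pos_homogeneous f"
  unfolding pos_homogeneous_def
proof (induction f rule: fbl_gen.induct)
  case (base x)
  then show ?case using L1dual_scaled by (simp add: delta_def)
next
  case (sup f g)
  then show ?case by (simp add: max_mult_distrib_left)
next
  case (inf f g)
  then show ?case by (simp add: min_mult_distrib_left)
qed (simp_all add: algebra_simps)

lemma fbl_gen_in_FBL:
  assumes f: "f \<in> fbl_gen" and "fbl_enorm f < \<infinity>"
  shows "f \<in> FBL"
proof -
  have "f \<in> H0"
    using assms fbl_gen_extensional fbl_gen_pos_homogeneous by (simp add: H0_def)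
  moreover have "fbl_enorm (\<lambda>\<phi>. f \<phi> - f \<phi>) < ereal e" if "0 < e" for e
    using fbl_enorm_zero that by (simp add: zero_ereal_def)
  ultimately show ?thesis
    using f unfolding FBL_def by blast
qed

definition finitely_lipschitz :: "hfun \<Rightarrow> bool" where
  "finitely_lipschitz f \<longleftrightarrow> (\<exists>X K. finite X \<and> X \<subseteq> L1 \<and> 0 \<le> K \<and>
     (\<forall>\<phi>\<in>L1dual. \<forall>\<psi>\<in>L1dual. \<bar>f \<phi> - f \<psi>\<bar> \<le> K * (\<Sum>x\<in>X. \<bar>\<phi> x - \<psi> x\<bar>)))"

lemma finitely_lipschitz_delta: "integrable leb01 x \<Longrightarrow> finitely_lipschitz (delta x)"
  unfolding finitely_lipschitz_def by (intro exI[of _ "{x}"] exI[of _ 1]) (auto simp: delta_def)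

lemma finitely_lipschitz_cmult:
  assumes "finitely_lipschitz f"
  shows "finitely_lipschitz (\<lambda>\<phi>. c * f \<phi>)"
proof -
  obtain X K where X: "finite X" "X \<subseteq> L1" "0 \<le> K"
    and f: "\<And>\<phi> \<psi>. \<phi> \<in> L1dual \<Longrightarrow> \<psi> \<in> L1dual \<Longrightarrow> \<bar>f \<phi> - f \<psi>\<bar> \<le> K * (\<Sum>x\<in>X. \<bar>\<phi> x - \<psi> x\<bar>)"
    using assms unfolding finitely_lipschitz_def by blast
  have "\<bar>c * f \<phi> - c * f \<psi>\<bar> \<le> (\<bar>c\<bar> * K) * (\<Sum>x\<in>X. \<bar>\<phi> x - \<psi> x\<bar>)"
    if "\<phi> \<in> L1dual" "\<psi> \<in> L1dual" for \<phi> \<psi>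
    using mult_left_mono[OF f[OF that], of "\<bar>c\<bar>"]
    by (simp add: abs_mult mult.assoc flip: right_diff_distrib)
  then show ?thesis
    using X unfolding finitely_lipschitz_def by (intro exI[of _ X] exI[of _ "\<bar>c\<bar> * K"]) auto
qed

lemma finitely_lipschitz_combine:
  assumes "finitely_lipschitz f" "finitely_lipschitz g"
    and h: "\<And>a b c d. \<bar>h a b - h c d\<bar> \<le> \<bar>a - c\<bar> + \<bar>b - d\<bar>"
  shows "finitely_lipschitz (\<lambda>\<phi>. h (f \<phi>) (g \<phi>))"
proof -
  obtain X K where X: "finite X" "X \<subseteq> L1" "0 \<le> K"
    and f: "\<And>\<phi> \<psi>. \<phi> \<in> L1dual \<Longrightarrow> \<psi> \<in> L1dual \<Longrightarrow> \<bar>f \<phi> - f \<psi>\<bar> \<le> K * (\<Sum>x\<in>X. \<bar>\<phi> x - \<psi> x\<bar>)"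
    using assms(1) unfolding finitely_lipschitz_def by blast
  obtain Y M where Y: "finite Y" "Y \<subseteq> L1" "0 \<le> M"
    and g: "\<And>\<phi> \<psi>. \<phi> \<in> L1dual \<Longrightarrow> \<psi> \<in> L1dual \<Longrightarrow> \<bar>g \<phi> - g \<psi>\<bar> \<le> M * (\<Sum>x\<in>Y. \<bar>\<phi> x - \<psi> x\<bar>)"
    using assms(2) unfolding finitely_lipschitz_def by blast
  have "\<bar>h (f \<phi>) (g \<phi>) - h (f \<psi>) (g \<psi>)\<bar> \<le> (K + M) * (\<Sum>x\<in>X \<union> Y. \<bar>\<phi> x - \<psi> x\<bar>)"
    if "\<phi> \<in> L1dual" "\<psi> \<in> L1dual" for \<phi> \<psi>
  proof -
    have "(\<Sum>x\<in>X. \<bar>\<phi> x - \<psi> x\<bar>) \<le> (\<Sum>x\<in>X \<union> Y. \<bar>\<phi> x - \<psi> x\<bar>)"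
      and "(\<Sum>x\<in>Y. \<bar>\<phi> x - \<psi> x\<bar>) \<le> (\<Sum>x\<in>X \<union> Y. \<bar>\<phi> x - \<psi> x\<bar>)"
      using X Y by (auto intro: sum_mono2)
    then have "K * (\<Sum>x\<in>X. \<bar>\<phi> x - \<psi> x\<bar>) + M * (\<Sum>x\<in>Y. \<bar>\<phi> x - \<psi> x\<bar>)
        \<le> (K + M) * (\<Sum>x\<in>X \<union> Y. \<bar>\<phi> x - \<psi> x\<bar>)"
      using X(3) Y(3) by (simp add: distrib_right add_mono mult_left_mono)
    then show ?thesis
      using h[of "f \<phi>" "g \<phi>" "f \<psi>" "g \<psi>"] f[OF that] g[OF that] by linarith
  qed
  then show ?thesis
    using X Y unfolding finitely_lipschitz_def
    by (intro exI[of _ "X \<union> Y"] exI[of _ "K + M"]) auto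
qed

lemma fbl_gen_finitely_lipschitz: "f \<in> fbl_gen \<Longrightarrow> finitely_lipschitz f"
proof (induction f rule: fbl_gen.induct)
  case (add f g)
  have "\<bar>(a + b) - (c + d)\<bar> \<le> \<bar>a - c\<bar> + \<bar>b - d\<bar>" for a b c d :: real
    by arith
  then show ?case using finitely_lipschitz_combine[OF add.IH, of "(+)"] by simp
next
  case (sup f g)
  have "\<bar>max a b - max c d\<bar> \<le> \<bar>a - c\<bar> + \<bar>b - d\<bar>" for a b c d :: real
    by (cases "a \<le> b"; cases "c \<le> d") (auto simp: max_def abs_if)
  then show ?case using finitely_lipschitz_combine[OF sup.IH, of max] by simp
next
  case (inf f g)
  have "\<bar>min a b - min c d\<bar> \<le> \<bar>a - c\<bar> + \<bar>b - d\<bar>" for a b c d :: real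
    by (cases "a \<le> b"; cases "c \<le> d") (auto simp: min_def abs_if)
  then show ?case using finitely_lipschitz_combine[OF inf.IH, of min] by simp
qed (simp_all add: finitely_lipschitz_delta finitely_lipschitz_cmult)

lemma fbl_gen_tendsto:
  assumes f: "f \<in> fbl_gen" and \<phi>: "\<phi> \<in> L1dual" and \<psi>: "\<And>m. \<psi> m \<in> L1dual"
    and conv: "\<And>x. integrable leb01 x \<Longrightarrow> (\<lambda>m. \<psi> m x) \<longlonglongrightarrow> \<phi> x"
  shows "(\<lambda>m. f (\<psi> m)) \<longlonglongrightarrow> f \<phi>"
proof -
  obtain X K where X: "finite X" "X \<subseteq> L1"
    and lip: "\<And>\<phi> \<psi>. \<phi> \<in> L1dual \<Longrightarrow> \<psi> \<in> L1dual \<Longrightarrow> \<bar>f \<phi> - f \<psi>\<bar> \<le> K * (\<Sum>x\<in>X. \<bar>\<phi> x - \<psi> x\<bar>)"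
    using fbl_gen_finitely_lipschitz[OF f] unfolding finitely_lipschitz_def by blast
  have "(\<lambda>m. \<Sum>x\<in>X. \<bar>\<psi> m x - \<phi> x\<bar>) \<longlonglongrightarrow> 0"
    using X conv by (intro tendsto_null_sum tendsto_rabs_zero LIM_zero) auto
  then have "(\<lambda>m. K * (\<Sum>x\<in>X. \<bar>\<psi> m x - \<phi> x\<bar>)) \<longlonglongrightarrow> 0"
    by (rule tendsto_mult_right_zero)
  then have "(\<lambda>m. f (\<psi> m) - f \<phi>) \<longlonglongrightarrow> 0"
    by (rule Lim_null_comparison[rotated]) (use lip[OF \<psi> \<phi>] in simp)
  then show ?thesis by (rule LIM_zero_cancel)
qed

lemma FBL_tendsto:
  assumes z: "z \<in> FBL" and \<phi>: "\<phi> \<in> L1dual" and \<psi>: "\<And>m. \<psi> m \<in> L1dual"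
    and \<psi>_bound: "\<And>m x. integrable leb01 x \<Longrightarrow> \<bar>\<psi> m x\<bar> \<le> B * L1norm x"
    and conv: "\<And>x. integrable leb01 x \<Longrightarrow> (\<lambda>m. \<psi> m x) \<longlonglongrightarrow> \<phi> x"
  shows "(\<lambda>m. z (\<psi> m)) \<longlonglongrightarrow> z \<phi>"
proof (rule LIMSEQ_I)
  fix r :: real assume "0 < r"
  obtain C where "0 < C" and \<phi>_bound: "\<And>x. integrable leb01 x \<Longrightarrow> \<bar>\<phi> x\<bar> \<le> C * L1norm x"
    using L1dual_bound[OF \<phi>] by blast
  define D where "D = max B C"
  have "0 < D" using \<open>0 < C\<close> by (simp add: D_def max.strict_coboundedI2)
  have bound_mono: "\<bar>\<eta> x\<bar> \<le> D * L1norm x"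
    if "\<And>x. integrable leb01 x \<Longrightarrow> \<bar>\<eta> x\<bar> \<le> E * L1norm x" "E \<le> D" "integrable leb01 x" for \<eta> E x
    using that(1)[OF that(3)] mult_right_mono[OF that(2) L1norm_nonneg[of x]] by linarith
  have \<psi>_D: "\<And>x. integrable leb01 x \<Longrightarrow> \<bar>\<psi> m x\<bar> \<le> D * L1norm x" for m
    using bound_mono[OF \<psi>_bound] by (simp add: D_def)
  have \<phi>_D: "\<And>x. integrable leb01 x \<Longrightarrow> \<bar>\<phi> x\<bar> \<le> D * L1norm x"
    using bound_mono[OF \<phi>_bound] by (simp add: D_def)
  have "0 < r / (3 * D)"
    using \<open>0 < r\<close> \<open>0 < D\<close> by simp
  then obtain g where g: "g \<in> fbl_gen" and zg: "fbl_enorm (\<lambda>\<phi>. z \<phi> - g \<phi>) < ereal (r / (3 * D))"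
    using z unfolding FBL_def by blast
  have zg_hom: "pos_homogeneous (\<lambda>\<phi>. z \<phi> - g \<phi>)"
    using z fbl_gen_pos_homogeneous[OF g] by (simp add: FBL_def H0_def pos_homogeneous_def algebra_simps)
  have near: "\<bar>z \<eta> - g \<eta>\<bar> \<le> r / 3"
    if "\<eta> \<in> L1dual" "\<And>x. integrable leb01 x \<Longrightarrow> \<bar>\<eta> x\<bar> \<le> D * L1norm x" for \<eta>
    using abs_le_fbl_enorm[OF zg_hom that(1) \<open>0 < D\<close> that(2) less_imp_le[OF zg]] \<open>0 < D\<close> by simp
  obtain N where N: "\<And>m. N \<le> m \<Longrightarrow> \<bar>g (\<psi> m) - g \<phi>\<bar> < r / 3"
    using LIMSEQ_D[OF fbl_gen_tendsto[OF g \<phi> \<psi> conv], of "r / 3"] \<open>0 < r\<close> by auto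
  have "\<bar>z (\<psi> m) - z \<phi>\<bar> < r" if "N \<le> m" for m
    using near[OF \<psi> \<psi>_D, of m] near[OF \<phi> \<phi>_D] N[OF that] by linarith
  then show "\<exists>N. \<forall>m\<ge>N. norm (z (\<psi> m) - z \<phi>) < r" by auto
qed

section \<open>The counterexample\<close>

definition abs_delta :: "(real \<Rightarrow> real) \<Rightarrow> hfun" where
  "abs_delta x = (\<lambda>\<phi>. \<bar>delta x \<phi>\<bar>)"

fun max_abs_rademacher :: "nat \<Rightarrow> hfun" where
  "max_abs_rademacher 0 = abs_delta (rademacher 0)"
| "max_abs_rademacher (Suc N) =
     (\<lambda>\<phi>. max (max_abs_rademacher N \<phi>) (abs_delta (rademacher (Suc N)) \<phi>))"

definition approximant :: "nat \<Rightarrow> hfun" where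
  "approximant N = (\<lambda>\<phi>. min (abs_delta (\<lambda>t. 1) \<phi>) ((1 / 2) * max_abs_rademacher N \<phi>))"

lemma abs_delta_fbl_gen: "integrable leb01 x \<Longrightarrow> abs_delta x \<in> fbl_gen"
proof -
  assume "integrable leb01 x"
  then have "(\<lambda>\<phi>. max (delta x \<phi>) ((-1) * delta x \<phi>)) \<in> fbl_gen"
    by (intro fbl_gen.sup fbl_gen.smult fbl_gen.base) simp_all
  moreover have "\<bar>a\<bar> = max a ((-1) * a)" for a :: real
    by (simp add: max_def)
  ultimately show ?thesis by (simp add: abs_delta_def)
qed

lemma max_abs_rademacher_fbl_gen: "max_abs_rademacher N \<in> fbl_gen"
proof (induction N)
  case (Suc N)
  show ?case using fbl_gen.sup[OF Suc.IH abs_delta_fbl_gen[OF integrable_rademacher]] by simp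
qed (simp add: abs_delta_fbl_gen)

lemma approximant_fbl_gen: "approximant N \<in> fbl_gen"
  unfolding approximant_def
  by (intro fbl_gen.inf fbl_gen.smult abs_delta_fbl_gen max_abs_rademacher_fbl_gen) simp

lemma abs_delta_le_max_abs_rademacher:
  "n \<le> N \<Longrightarrow> \<bar>delta (rademacher n) \<phi>\<bar> \<le> max_abs_rademacher N \<phi>"
  by (induction N) (auto simp: abs_delta_def le_Suc_eq intro: le_max_iff_disj[THEN iffD2])

lemma max_abs_rademacher_attained: "\<exists>n\<le>N. max_abs_rademacher N \<phi> = \<bar>delta (rademacher n) \<phi>\<bar>"
proof (induction N)
  case (Suc N)
  then show ?case
    by (cases "max_abs_rademacher N \<phi> \<le> abs_delta (rademacher (Suc N)) \<phi>")
       (auto simp: abs_delta_def max_def intro: le_SucI)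
qed (simp add: abs_delta_def)

lemma max_abs_rademacher_mono: "N \<le> M \<Longrightarrow> max_abs_rademacher N \<phi> \<le> max_abs_rademacher M \<phi>"
  by (induction M) (auto simp: le_Suc_eq intro: le_max_iff_disj[THEN iffD2])

lemma approximant_nonneg: "0 \<le> approximant N \<phi>"
  using abs_delta_le_max_abs_rademacher[of N N \<phi>] by (simp add: approximant_def abs_delta_def)

lemma approximant_mono: "N \<le> M \<Longrightarrow> approximant N \<phi> \<le> approximant M \<phi>"
  using max_abs_rademacher_mono[of N M \<phi>] by (auto simp: approximant_def min_def)

lemma approximant_le: "approximant N \<phi> \<le> abs_delta (\<lambda>t. 1) \<phi>"
  by (simp add: approximant_def)

lemma fbl_admissible_sum_rademacher_le:
  assumes adm: "fbl_admissible n xs" and m: "\<And>k. k < n \<Longrightarrow> m k \<le> N"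
  shows "(\<Sum>k<n. \<bar>xs k (rademacher (m k))\<bar>) \<le> 1"
proof -
  define L where "L = Suc N"
  define \<sigma> :: "nat \<Rightarrow> nat \<Rightarrow> real" where
    "\<sigma> k j = (if even (j div 2^(L - Suc (m k))) then 1 else -1)" for k j
  have \<sigma>_abs: "\<bar>\<sigma> k j\<bar> = 1" for k j
    by (simp add: \<sigma>_def)
  have dual: "xs k \<in> L1dual" if "k < n" for k
    using adm that by (simp add: fbl_admissible_def)
  have "\<bar>xs k (rademacher (m k))\<bar> \<le> (\<Sum>j<2^L. \<bar>xs k (dyadic_indicator L j)\<bar>)" if "k < n" for k
  proof -
    have "m k < L" using m[OF that] by (simp add: L_def)
    then have "rademacher (m k) = (\<lambda>t. \<Sum>j<2^L. \<sigma> k j * dyadic_indicator L j t)"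
      by (simp add: fun_eq_iff sum_dyadic_indicator \<sigma>_def rademacher_dyadic_index)
    then have "xs k (rademacher (m k)) = (\<Sum>j<2^L. \<sigma> k j * xs k (dyadic_indicator L j))"
      using L1dual_sum[OF dual[OF that], of "{..<2^L}" "dyadic_indicator L" "\<sigma> k"] by simp
    also have "\<bar>\<dots>\<bar> \<le> (\<Sum>j<2^L. \<bar>\<sigma> k j * xs k (dyadic_indicator L j)\<bar>)"
      by (rule sum_abs)
    also have "\<dots> = (\<Sum>j<2^L. \<bar>xs k (dyadic_indicator L j)\<bar>)"
      by (simp add: abs_mult \<sigma>_abs)
    finally show ?thesis .
  qed
  then have "(\<Sum>k<n. \<bar>xs k (rademacher (m k))\<bar>) \<le> (\<Sum>k<n. \<Sum>j<2^L. \<bar>xs k (dyadic_indicator L j)\<bar>)"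
    by (intro sum_mono) simp
  also have "\<dots> = (\<Sum>j<2^L. \<Sum>k<n. \<bar>xs k (dyadic_indicator L j)\<bar>)"
    by (rule sum.swap)
  also have "\<dots> \<le> (\<Sum>j<(2::nat)^L. 1 / 2^L)"
  proof (rule sum_mono)
    fix j assume "j \<in> {..<(2::nat)^L}"
    then show "(\<Sum>k<n. \<bar>xs k (dyadic_indicator L j)\<bar>) \<le> 1 / 2^L"
      using fbl_admissible_sum_le[OF adm integrable_dyadic_indicator, of L j]
        L1norm_dyadic_indicator[of j L] by simp
  qed
  also have "\<dots> = 1" by simp
  finally show ?thesis .
qed

lemma fbl_enorm_approximant_le: "fbl_enorm (approximant N) \<le> ereal (1 / 2)"
proof (rule fbl_enorm_le)
  fix n xs assume adm: "fbl_admissible n xs"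
  have "\<forall>k. \<exists>j. k < n \<longrightarrow> j \<le> N \<and> max_abs_rademacher N (xs k) = \<bar>delta (rademacher j) (xs k)\<bar>"
    using max_abs_rademacher_attained by blast
  then obtain m where m: "\<And>k. k < n \<Longrightarrow> m k \<le> N \<and>
      max_abs_rademacher N (xs k) = \<bar>delta (rademacher (m k)) (xs k)\<bar>"
    by metis
  have "\<bar>approximant N (xs k)\<bar> \<le> (1 / 2) * \<bar>xs k (rademacher (m k))\<bar>" if "k < n" for k
    using m[OF that] adm that approximant_nonneg[of N "xs k"]
    by (simp add: approximant_def fbl_admissible_def delta_def)
  then have "(\<Sum>k<n. \<bar>approximant N (xs k)\<bar>) \<le> (\<Sum>k<n. (1 / 2) * \<bar>xs k (rademacher (m k))\<bar>)"
    by (intro sum_mono) simp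
  also have "\<dots> = (1 / 2) * (\<Sum>k<n. \<bar>xs k (rademacher (m k))\<bar>)"
    by (simp add: sum_distrib_left)
  also have "\<dots> \<le> 1 / 2"
    using fbl_admissible_sum_rademacher_le[OF adm, of m N] m by simp
  finally show "(\<Sum>k<n. \<bar>approximant N (xs k)\<bar>) \<le> 1 / 2" .
qed

lemma fbl_enorm_abs_delta_one: "fbl_enorm (abs_delta (\<lambda>t. 1)) = 1"
proof (rule antisym)
  have "fbl_enorm (abs_delta (\<lambda>t. 1)) \<le> ereal 1"
  proof (rule fbl_enorm_le)
    fix n xs assume adm: "fbl_admissible n xs"
    then have "(\<Sum>k<n. \<bar>abs_delta (\<lambda>t. 1) (xs k)\<bar>) = (\<Sum>k<n. \<bar>xs k (\<lambda>t. 1)\<bar>)"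
      by (simp add: abs_delta_def delta_def fbl_admissible_def)
    also have "\<dots> \<le> 1"
      using fbl_admissible_sum_le[OF adm, of "\<lambda>t. 1"] by simp
    finally show "(\<Sum>k<n. \<bar>abs_delta (\<lambda>t. 1) (xs k)\<bar>) \<le> 1" .
  qed
  then show "fbl_enorm (abs_delta (\<lambda>t. 1)) \<le> 1"
    by (simp add: one_ereal_def)
  have one_meas: "(\<lambda>t. 1) \<in> borel_measurable leb01"
    by simp
  have adm: "fbl_admissible 1 (\<lambda>k. weighted_integral (\<lambda>t. 1))"
    by (intro fbl_admissible_single weighted_integral_L1dual abs_weighted_integral_le one_meas) simp_all
  have "abs_delta (\<lambda>t. 1) (weighted_integral (\<lambda>t. 1)) = 1"
    using weighted_integral_L1dual[OF one_meas]
    by (simp add: abs_delta_def delta_def weighted_integral_def)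
  then show "1 \<le> fbl_enorm (abs_delta (\<lambda>t. 1))"
    using fbl_enorm_ge[OF adm, of "abs_delta (\<lambda>t. 1)"] by (simp add: one_ereal_def)
qed

lemma abs_rademacher_perturbation_le:
  assumes "\<bar>\<phi> f\<bar> \<le> C * L1norm f"
  shows "\<bar>\<phi> f + t * weighted_integral (rademacher m) f\<bar> \<le> (C + \<bar>t\<bar>) * L1norm f"
proof -
  have "\<bar>\<phi> f + t * weighted_integral (rademacher m) f\<bar> \<le> \<bar>\<phi> f\<bar> + \<bar>t\<bar> * \<bar>weighted_integral (rademacher m) f\<bar>"
    using abs_triangle_ineq[of "\<phi> f" "t * weighted_integral (rademacher m) f"] by (simp add: abs_mult)
  also have "\<dots> \<le> C * L1norm f + \<bar>t\<bar> * L1norm f"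
    using assms abs_rademacher_functional_le by (intro add_mono mult_left_mono) auto
  finally show ?thesis by (simp add: algebra_simps)
qed

lemma tendsto_rademacher_perturbation:
  "integrable leb01 f \<Longrightarrow> (\<lambda>m. \<phi> f + t * weighted_integral (rademacher m) f) \<longlonglongrightarrow> \<phi> f"
  using tendsto_add[OF tendsto_const tendsto_mult_right_zero[OF tendsto_rademacher_coeff]]
  by (simp add: weighted_integral_def)

lemma abs_delta_one_le_upper_bound:
  assumes z: "z \<in> FBL" and up: "\<And>N. fle (approximant N) z" and \<phi>: "\<phi> \<in> L1dual"
  shows "abs_delta (\<lambda>t. 1) \<phi> \<le> z \<phi>"
proof -
  define A where "A = \<bar>\<phi> (\<lambda>t. 1)\<bar>"
  obtain C where "0 < C" and C: "\<And>f. integrable leb01 f \<Longrightarrow> \<bar>\<phi> f\<bar> \<le> C * L1norm f"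
    using L1dual_bound[OF \<phi>] by blast
  define t where "t = C + 2 * A"
  have "0 \<le> t" using \<open>0 < C\<close> by (simp add: t_def A_def)
  define \<psi> where "\<psi> m = (\<lambda>g. \<phi> g + t * weighted_integral (rademacher m) g)" for m
  have \<psi>: "\<psi> m \<in> L1dual" for m
    using L1dual_lincomb[OF \<phi> rademacher_functional_L1dual, of 1 t] by (simp add: \<psi>_def)
  have \<psi>_bound: "\<bar>\<psi> m f\<bar> \<le> (C + t) * L1norm f" if "integrable leb01 f" for m f
    using abs_rademacher_perturbation_le[of \<phi> f C t m, OF C[OF that]] \<open>0 \<le> t\<close> by (simp add: \<psi>_def)
  have conv: "(\<lambda>m. \<psi> m f) \<longlonglongrightarrow> \<phi> f" if "integrable leb01 f" for f
    using tendsto_rademacher_perturbation[OF that] by (simp add: \<psi>_def)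
  have half_max: "A \<le> (1 / 2) * max_abs_rademacher m (\<psi> m)" for m
  proof -
    have "weighted_integral (rademacher m) (rademacher m) = 1"
      by (simp add: weighted_integral_def)
    then have "\<psi> m (rademacher m) = \<phi> (rademacher m) + t"
      by (simp add: \<psi>_def)
    moreover have "\<bar>\<phi> (rademacher m)\<bar> \<le> C"
      using C[of "rademacher m"] by simp
    moreover have "\<bar>\<psi> m (rademacher m)\<bar> \<le> max_abs_rademacher m (\<psi> m)"
      using abs_delta_le_max_abs_rademacher[of m m "\<psi> m"] \<psi> by (simp add: delta_def)
    ultimately show ?thesis by (simp add: t_def)
  qed
  have "min \<bar>\<psi> m (\<lambda>t. 1)\<bar> A \<le> approximant m (\<psi> m)" for m
    using half_max[of m] \<psi>[of m] by (simp add: approximant_def abs_delta_def delta_def min.mono)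
  then have "min \<bar>\<psi> m (\<lambda>t. 1)\<bar> A \<le> z (\<psi> m)" for m
    using up[of m] \<psi>[of m] order_trans unfolding fle_def by blast
  moreover have "(\<lambda>m. min \<bar>\<psi> m (\<lambda>t. 1)\<bar> A) \<longlonglongrightarrow> min \<bar>\<phi> (\<lambda>t. 1)\<bar> A"
    by (intro tendsto_min tendsto_rabs tendsto_const conv) simp
  moreover have "(\<lambda>m. z (\<psi> m)) \<longlonglongrightarrow> z \<phi>"
    using z \<phi> \<psi> \<psi>_bound conv by (rule FBL_tendsto)
  ultimately have "min \<bar>\<phi> (\<lambda>t. 1)\<bar> A \<le> z \<phi>"
    using LIMSEQ_le by blast
  then show ?thesis
    using \<phi> by (simp add: A_def abs_delta_def delta_def)
qed

theorem theorem4p13: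
  shows "\<exists>F y. F \<noteq> {} \<and> F \<subseteq> FBL \<and> (\<forall>x\<in>F. fle (\<lambda>\<phi>. 0) x)
     \<and> (\<forall>a\<in>F. \<forall>b\<in>F. \<exists>c\<in>F. fle a c \<and> fle b c)
     \<and> is_sup_in_FBL F y
     \<and> (SUP x\<in>F. fbl_enorm x) \<noteq> fbl_enorm y"
proof (intro exI[of _ "range approximant"] exI[of _ "abs_delta (\<lambda>t. 1)"] conjI)
  have "fbl_enorm (approximant N) < \<infinity>" for N
    using order.strict_trans1[OF fbl_enorm_approximant_le[of N], of \<infinity>] by simp
  then show "range approximant \<subseteq> FBL"
    using approximant_fbl_gen by (auto intro: fbl_gen_in_FBL)
  show "\<forall>x\<in>range approximant. fle (\<lambda>\<phi>. 0) x"
    by (simp add: fle_def approximant_nonneg)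
  have "fle (approximant i) (approximant (max i j)) \<and> fle (approximant j) (approximant (max i j))" for i j
    by (simp add: fle_def approximant_mono)
  then show "\<forall>a\<in>range approximant. \<forall>b\<in>range approximant. \<exists>c\<in>range approximant. fle a c \<and> fle b c"
    by blast
  have "abs_delta (\<lambda>t. 1) \<in> FBL"
    using fbl_enorm_abs_delta_one by (intro fbl_gen_in_FBL abs_delta_fbl_gen) simp_all
  then show "is_sup_in_FBL (range approximant) (abs_delta (\<lambda>t. 1))"
    unfolding is_sup_in_FBL_def
    by (auto simp: fle_def approximant_le abs_delta_one_le_upper_bound)
  have "(SUP x\<in>range approximant. fbl_enorm x) \<le> ereal (1 / 2)"
    by (auto intro: SUP_least fbl_enorm_approximant_le)
  then show "(SUP x\<in>range approximant. fbl_enorm x) \<noteq> fbl_enorm (abs_delta (\<lambda>t. 1))"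
    by (auto simp: fbl_enorm_abs_delta_one)
qed simp

end
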